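(* Let $(M,J,c)$ be a conformal Hermitian structure of dimension $n\ge4$, i.e. a conformal almost Hermitian structure with $N_J=0$. Then $G^c_-=0$ and the connection $\nabla^{gc}$ has Hermitian torsion, i.e. its torsion $T$ satisfies $T(JX,JY)=T(X,Y)$.
   Context: A conformal almost Hermitian structure $(M,J,c)$: $J$ almost complex ($J^2=-\mathrm{id}$), $c$ a conformal class of Riemannian metrics for which $J$ is orthogonal. For $g\in c$ with Levi-Civita connection $\nabla$, $B_a:=\frac1{n-2}J^c{}_b\nabla_cJ^b{}_a$ and $\nabla^c_aY^b:=\nabla_aY^b-B_aY^b+B^bY_a-B_cY^c\delta^b_a$ (independent of $g\in c$; the unique torsion-free connection with $\nabla^cg=2B\otimes g$ and $\nabla^c_aJ^a{}_b=0$). $G^c(X,Y):=-\frac12J(\nabla^c_YJ)X$, $G^c_-(X,Y):=\frac12(G^c(X,Y)-G^c(JX,JY))$, $\nabla^{gc}_XY:=\nabla^c_XY+G^c(Y,X)$. $N_J(X,Y):=\frac14([JX,JY]-J[JX,Y]-J[X,JY]-[X,Y])$; torsion $T(X,Y)=D_XY-D_YX-[X,Y]$. *)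

theory Defs
  imports "HOL-Analysis.Analysis"
begin

text \<open>Local coordinate rendering: an open set U of real^'n (a chart of M),
  a metric g in the conformal class (components g x i j = g_ij(x)) and an almost complex
  structure J (components J x a b = J^a_b(x)).\<close>

type_synonym 'n tens2 = "real^'n \<Rightarrow> 'n \<Rightarrow> 'n \<Rightarrow> real"
type_synonym 'n vfield = "real^'n \<Rightarrow> real^'n"

definition kdelta :: "'a \<Rightarrow> 'a \<Rightarrow> real" where
  "kdelta a b = (if a = b then 1 else 0)"

definition pd :: "(real^'n::finite \<Rightarrow> real) \<Rightarrow> 'n \<Rightarrow> real^'n \<Rightarrow> real" where
  "pd f i x = frechet_derivative f (at x) (axis i 1)"

fun Ck :: "nat \<Rightarrow> (real^'n::finite \<Rightarrow> real) \<Rightarrow> (real^'n) set \<Rightarrow> bool" where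
  "Ck 0 f U = continuous_on U f"
| "Ck (Suc k) f U = (f differentiable_on U \<and> (\<forall>i. Ck k (pd f i) U))"

definition smooth_fun :: "(real^'n::finite \<Rightarrow> real) \<Rightarrow> (real^'n) set \<Rightarrow> bool" where
  "smooth_fun f U = (\<forall>k. Ck k f U)"

definition smooth_field :: "'n::finite vfield \<Rightarrow> (real^'n) set \<Rightarrow> bool" where
  "smooth_field X U = (\<forall>k. smooth_fun (\<lambda>y. X y $ k) U)"

definition smooth_tens :: "'n::finite tens2 \<Rightarrow> (real^'n) set \<Rightarrow> bool" where
  "smooth_tens T U = (\<forall>i j. smooth_fun (\<lambda>y. T y i j) U)"

definition ginv :: "'n::finite tens2 \<Rightarrow> real^'n \<Rightarrow> 'n \<Rightarrow> 'n \<Rightarrow> real" where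
  "ginv g x i j = matrix_inv (\<chi> a b. g x a b) $ i $ j"

text \<open>Christoffel symbols of the Levi-Civita connection: LC g x k i j = Gamma^k_{ij}.\<close>
definition LC :: "'n::finite tens2 \<Rightarrow> real^'n \<Rightarrow> 'n \<Rightarrow> 'n \<Rightarrow> 'n \<Rightarrow> real" where
  "LC g x k i j = (1/2) * (\<Sum>l\<in>UNIV. ginv g x k l *
      (pd (\<lambda>y. g y j l) i x + pd (\<lambda>y. g y i l) j x - pd (\<lambda>y. g y i j) l x))"

text \<open>(nabla_c J)^b_a for the Levi-Civita connection.\<close>
definition nablaJ :: "'n::finite tens2 \<Rightarrow> 'n tens2 \<Rightarrow> real^'n \<Rightarrow> 'n \<Rightarrow> 'n \<Rightarrow> 'n \<Rightarrow> real" where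
  "nablaJ g J x c b a = pd (\<lambda>y. J y b a) c x
      + (\<Sum>d\<in>UNIV. LC g x b c d * J x d a) - (\<Sum>d\<in>UNIV. LC g x d c a * J x b d)"

definition Blow :: "'n::finite tens2 \<Rightarrow> 'n tens2 \<Rightarrow> real^'n \<Rightarrow> 'n \<Rightarrow> real" where
  "Blow g J x a = (1 / (real CARD('n) - 2)) *
      (\<Sum>b\<in>UNIV. \<Sum>c\<in>UNIV. J x c b * nablaJ g J x c b a)"

definition Bup :: "'n::finite tens2 \<Rightarrow> 'n tens2 \<Rightarrow> real^'n \<Rightarrow> 'n \<Rightarrow> real" where
  "Bup g J x b = (\<Sum>d\<in>UNIV. ginv g x b d * Blow g J x d)"

text \<open>Christoffel symbols of nabla^c:
  nabla^c_a Y^b = nabla_a Y^b - B_a Y^b + B^b Y_a - B_d Y^d delta^b_a, i.e. GamC g J x b a d.\<close>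
definition GamC :: "'n::finite tens2 \<Rightarrow> 'n tens2 \<Rightarrow> real^'n \<Rightarrow> 'n \<Rightarrow> 'n \<Rightarrow> 'n \<Rightarrow> real" where
  "GamC g J x b a d = LC g x b a d - Blow g J x a * kdelta b d
      + Bup g J x b * g x a d - Blow g J x d * kdelta b a"

text \<open>(nabla^c_a J)^b_e.\<close>
definition nablacJ :: "'n::finite tens2 \<Rightarrow> 'n tens2 \<Rightarrow> real^'n \<Rightarrow> 'n \<Rightarrow> 'n \<Rightarrow> 'n \<Rightarrow> real" where
  "nablacJ g J x a b e = pd (\<lambda>y. J y b e) a x
      + (\<Sum>d\<in>UNIV. GamC g J x b a d * J x d e) - (\<Sum>d\<in>UNIV. GamC g J x d a e * J x b d)"

definition Jv :: "'n::finite tens2 \<Rightarrow> real^'n \<Rightarrow> real^'n \<Rightarrow> real^'n" where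
  "Jv J x v = (\<chi> k. \<Sum>b\<in>UNIV. J x k b * v $ b)"

text \<open>G^c(X,Y) = -1/2 J (nabla^c_Y J) X at the point x.\<close>
definition Gc :: "'n::finite tens2 \<Rightarrow> 'n tens2 \<Rightarrow> real^'n \<Rightarrow> real^'n \<Rightarrow> real^'n \<Rightarrow> real^'n" where
  "Gc g J x v w = (\<chi> k. - (1/2) * (\<Sum>b\<in>UNIV. \<Sum>e\<in>UNIV. \<Sum>a\<in>UNIV.
      J x k b * (w $ a * nablacJ g J x a b e) * v $ e))"

definition Gcminus :: "'n::finite tens2 \<Rightarrow> 'n tens2 \<Rightarrow> real^'n \<Rightarrow> real^'n \<Rightarrow> real^'n \<Rightarrow> real^'n" where
  "Gcminus g J x v w = (1/2) *\<^sub>R (Gc g J x v w - Gc g J x (Jv J x v) (Jv J x w))"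

definition Jfield :: "'n::finite tens2 \<Rightarrow> 'n vfield \<Rightarrow> 'n vfield" where
  "Jfield J X = (\<lambda>x. Jv J x (X x))"

definition lie :: "'n::finite vfield \<Rightarrow> 'n vfield \<Rightarrow> 'n vfield" where
  "lie X Y x = (\<chi> b. \<Sum>a\<in>UNIV. X x $ a * pd (\<lambda>y. Y y $ b) a x - Y x $ a * pd (\<lambda>y. X y $ b) a x)"

definition conn_c :: "'n::finite tens2 \<Rightarrow> 'n tens2 \<Rightarrow> 'n vfield \<Rightarrow> 'n vfield \<Rightarrow> 'n vfield" where
  "conn_c g J X Y x = (\<chi> b. (\<Sum>a\<in>UNIV. X x $ a * pd (\<lambda>y. Y y $ b) a x)
      + (\<Sum>a\<in>UNIV. \<Sum>d\<in>UNIV. GamC g J x b a d * X x $ a * Y x $ d))"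

definition conn_gc :: "'n::finite tens2 \<Rightarrow> 'n tens2 \<Rightarrow> 'n vfield \<Rightarrow> 'n vfield \<Rightarrow> 'n vfield" where
  "conn_gc g J X Y x = conn_c g J X Y x + Gc g J x (Y x) (X x)"

definition torsion :: "('n::finite vfield \<Rightarrow> 'n vfield \<Rightarrow> 'n vfield) \<Rightarrow> 'n vfield \<Rightarrow> 'n vfield \<Rightarrow> 'n vfield" where
  "torsion D X Y x = D X Y x - D Y X x - lie X Y x"

definition nijenhuis :: "'n::finite tens2 \<Rightarrow> 'n vfield \<Rightarrow> 'n vfield \<Rightarrow> 'n vfield" where
  "nijenhuis J X Y x = (1/4) *\<^sub>R (lie (Jfield J X) (Jfield J Y) x
      - Jv J x (lie (Jfield J X) Y x) - Jv J x (lie X (Jfield J Y) x) - lie X Y x)"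

text \<open>Conformal almost Hermitian structure on the chart U (g any representative of c).\<close>
definition conf_almost_hermitian :: "(real^'n::finite) set \<Rightarrow> 'n tens2 \<Rightarrow> 'n tens2 \<Rightarrow> bool" where
  "conf_almost_hermitian U g J \<longleftrightarrow> open U \<and> smooth_tens g U \<and> smooth_tens J U
    \<and> (\<forall>x\<in>U. \<forall>i j. g x i j = g x j i)
    \<and> (\<forall>x\<in>U. \<forall>v. v \<noteq> 0 \<longrightarrow> (\<Sum>i\<in>UNIV. \<Sum>j\<in>UNIV. g x i j * v $ i * v $ j) > 0)
    \<and> (\<forall>x\<in>U. \<forall>a c. (\<Sum>b\<in>UNIV. J x a b * J x b c) = - kdelta a c)
    \<and> (\<forall>x\<in>U. \<forall>a b. (\<Sum>c\<in>UNIV. \<Sum>d\<in>UNIV. g x c d * J x c a * J x d b) = g x a b)"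

end

theory Submission
  imports Defs
begin

text \<open>Fix a point and let \<open>A(y)\<close> be the endomorphism \<open>\<nabla>\<^sup>c\<^sub>yJ\<close>. Since \<open>\<nabla>\<^sup>c\<close> is a torsion-free
  Weyl connection (\<open>\<nabla>\<^sup>cg = 2B\<otimes>g\<close>) and \<open>J\<close> is \<open>g\<close>-orthogonal, each \<open>A(y)\<close> anticommutes with \<open>J\<close>
  and is \<open>g\<close>-skew; since \<open>\<nabla>\<^sup>c\<close> is torsion-free, \<open>N\<^sub>J = 0\<close> reads
  \<open>A(Jv)w - A(Jw)v + J A(w)v - J A(v)w = 0\<close>. Then \<open>S(y,x) = A(Jy)x - J A(y)x\<close> is symmetric in
  \<open>(y,x)\<close> while \<open>g(S(y,x),z)\<close> is skew in \<open>(x,z)\<close>; as in the uniqueness proof for the Levi-Civita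
  connection such a form vanishes, so \<open>A(Jw)Jv = A(w)v\<close>, i.e. \<open>G\<^sup>c(JX,JY) = G\<^sup>c(X,Y)\<close>. This is
  \<open>G\<^sup>c\<^sub>- = 0\<close>, and as \<open>\<nabla>\<^sup>c\<close> is torsion-free the torsion of \<open>\<nabla>\<^sup>g\<^sup>c\<close> is
  \<open>G\<^sup>c(Y,X) - G\<^sup>c(X,Y)\<close>, which is therefore \<open>J\<close>-invariant.\<close>

section \<open>Partial derivatives\<close>

lemma pd_const [simp]: "pd (\<lambda>y. c) i x = 0"
  by (simp add: pd_def)

lemma Ck_const: "Ck k (\<lambda>y. c) (U::(real^'n::finite) set)"
proof (induction k arbitrary: c)
  case 0
  then show ?case by simp
next
  case (Suc k)
  have "pd (\<lambda>y::real^'n. c) i = (\<lambda>x. 0)" for i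
    by (rule ext) simp
  then show ?case using Suc.IH[of 0] by simp
qed

lemma smooth_field_const: "smooth_field (\<lambda>y. v) U"
  unfolding smooth_field_def smooth_fun_def using Ck_const by blast

lemma smooth_fun_differentiable_at:
  assumes "smooth_fun f U" "open U" "x \<in> U"
  shows "f differentiable at x"
proof -
  have "Ck (Suc 0) f U"
    using assms(1) unfolding smooth_fun_def by blast
  then show ?thesis
    using assms differentiable_on_eq_differentiable_at by auto
qed

lemma pd_cong_open:
  assumes "f differentiable at x" "open S" "x \<in> S" "\<And>y. y \<in> S \<Longrightarrow> f y = h y"
  shows "pd f i x = pd h i x"
  unfolding pd_def using frechet_derivative_transform_within_open[OF assms] by simp

lemma pd_eq_0_if_locally_const:
  assumes "open S" "x \<in> S" "\<And>y. y \<in> S \<Longrightarrow> f y = c"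
  shows "pd f i x = 0"
proof -
  have "pd (\<lambda>y. c) i x = pd f i x"
    by (rule pd_cong_open) (use assms in auto)
  then show ?thesis by simp
qed

lemma pd_add:
  assumes "f differentiable at x" "h differentiable at x"
  shows "pd (\<lambda>y. f y + h y) i x = pd f i x + pd h i x"
proof -
  have "((\<lambda>y. f y + h y) has_derivative
      (\<lambda>v. frechet_derivative f (at x) v + frechet_derivative h (at x) v)) (at x)"
    using assms by (intro has_derivative_add) (simp_all add: frechet_derivative_works)
  from frechet_derivative_at[OF this] show ?thesis unfolding pd_def by metis
qed

lemma pd_mult:
  assumes "f differentiable at x" "h differentiable at x"
  shows "pd (\<lambda>y. f y * h y) i x = f x * pd h i x + pd f i x * h x"
proof -
  have "((\<lambda>y. f y * h y) has_derivative
      (\<lambda>v. f x * frechet_derivative h (at x) v + frechet_derivative f (at x) v * h x)) (at x)"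
    using assms by (intro has_derivative_mult) (simp_all add: frechet_derivative_works)
  from frechet_derivative_at[OF this] show ?thesis unfolding pd_def by metis
qed

lemma pd_mult_const:
  assumes "f differentiable at x"
  shows "pd (\<lambda>y. f y * c) i x = pd f i x * c"
  using pd_mult[OF assms differentiable_const] by simp

lemma pd_sum:
  assumes "\<And>e. f e differentiable at x"
  shows "pd (\<lambda>y. \<Sum>e\<in>(S::'b set). f e y) i x = (\<Sum>e\<in>S. pd (f e) i x)"
proof -
  have "((\<lambda>y. \<Sum>e\<in>S. f e y) has_derivative
      (\<lambda>v. \<Sum>e\<in>S. frechet_derivative (f e) (at x) v)) (at x)"
    using assms by (intro has_derivative_sum) (simp add: frechet_derivative_works)
  from frechet_derivative_at[OF this] show ?thesis unfolding pd_def by metis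
qed

lemma pd_sum_mult:
  assumes "\<And>e. f e differentiable at x" "\<And>e. h e differentiable at x"
  shows "pd (\<lambda>y. \<Sum>e\<in>(S::'b set). f e y * h e y) i x
    = (\<Sum>e\<in>S. f e x * pd (h e) i x + pd (f e) i x * h e x)"
  using assms by (simp add: pd_sum pd_mult differentiable_mult)

section \<open>Linear algebra\<close>

lemma matrix_vector_mult_uminus: "(A::real^'n^'m) *v (- u) = - (A *v u)"
  by (simp add: vec_eq_iff matrix_vector_mult_def sum_negf)

lemma matrix_vector_mult_uminus_left: "(- A::real^'n^'m) *v u = - (A *v u)"
  by (simp add: vec_eq_iff matrix_vector_mult_def sum_negf)

lemma inner_matrix_vector_sum:
  "u \<bullet> ((N::real^'n^'m) *v v) = (\<Sum>b\<in>UNIV. \<Sum>d\<in>UNIV. u$b * v$d * N$b$d)"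
  by (simp add: inner_vec_def matrix_vector_mult_def sum_distrib_left algebra_simps)

lemma inner_matrix_vector_left: "((M::real^'n^'m) *v u) \<bullet> w = u \<bullet> (transpose M *v w)"
  by (metis dot_lmul_matrix inner_commute transpose_matrix_vector)

lemma inner_matrix_vector_both:
  "((M::real^'n^'m) *v u) \<bullet> ((N::real^'k^'m) *v v) = u \<bullet> ((transpose M ** N) *v v)"
  by (simp only: inner_matrix_vector_left matrix_vector_mul_assoc)

lemma inner_matrix_vector_pair_sum:
  "((M::real^'n^'n) *v u) \<bullet> ((N::real^'n^'n) *v v)
    = (\<Sum>b\<in>UNIV. \<Sum>d\<in>UNIV. u$b * v$d * (\<Sum>c\<in>UNIV. M$c$b * N$c$d))"
  unfolding inner_matrix_vector_both
  by (simp add: inner_matrix_vector_sum matrix_matrix_mult_def transpose_def)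

lemma sum_swap_mult_left:
  fixes f :: "'a \<Rightarrow> 'b::semiring_0"
  shows "(\<Sum>c\<in>C. \<Sum>a\<in>A. f a * F a c) = (\<Sum>a\<in>A. f a * (\<Sum>c\<in>C. F a c))"
  by (simp only: sum_distrib_left) (rule sum.swap)

lemma bilinear_sum_add:
  "(\<Sum>b\<in>UNIV. \<Sum>d\<in>UNIV. (u::real^'n)$b * v$d * F b d) + (\<Sum>b\<in>UNIV. \<Sum>d\<in>UNIV. u$b * v$d * G b d)
    = (\<Sum>b\<in>UNIV. \<Sum>d\<in>UNIV. u$b * v$d * (F b d + G b d))"
  by (simp add: sum.distrib[symmetric] algebra_simps)

lemma bilinear_sum_swap:
  "(\<Sum>b\<in>UNIV. \<Sum>d\<in>UNIV. (u::real^'n)$b * v$d * F b d) = (\<Sum>b\<in>UNIV. \<Sum>d\<in>UNIV. v$b * u$d * F d b)"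
  by (subst sum.swap) (simp add: algebra_simps)

lemma bilinear_sum_axis:
  "(\<Sum>b\<in>UNIV. \<Sum>d\<in>UNIV. (axis b0 1 :: real^'n)$b * (axis d0 1 :: real^'n)$d * F b d) = F b0 d0"
proof -
  have "(\<Sum>d\<in>UNIV. (axis b0 1 :: real^'n)$b * (axis d0 1 :: real^'n)$d * F b d)
      = (if b = b0 then F b d0 else 0)" for b
    by (simp add: axis_def if_distrib[of "\<lambda>t. t * _"] cong: if_cong)
  then show ?thesis by simp
qed

lemma sum_kdelta [simp]: "(\<Sum>c\<in>(UNIV::'a::finite set). kdelta c b * f c) = f b"
proof -
  have "kdelta c b * f c = (if c = b then f c else 0)" for c :: 'a
    by (simp add: kdelta_def)
  then show ?thesis by simp
qed

lemma kdelta_sym: "kdelta a b = kdelta b a"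
  by (simp add: kdelta_def)

lemma sum_kdelta' [simp]: "(\<Sum>c\<in>(UNIV::'a::finite set). kdelta b c * f c) = f b"
  using sum_kdelta[of b f] by (simp add: kdelta_sym)

lemma sym_skew_form_eq_0:
  fixes T :: "'a \<Rightarrow> 'a \<Rightarrow> 'a \<Rightarrow> real"
  assumes sym: "\<And>x y z. T x y z = T y x z" and skew: "\<And>x y z. T x y z = - T x z y"
  shows "T x y z = 0"
proof -
  have "T x y z = - T y z x" using sym skew by metis
  also have "\<dots> = T z x y" using sym skew by metis
  also have "\<dots> = - T x y z" using sym skew by metis
  finally show ?thesis by simp
qed

text \<open>If \<open>D\<close> is a torsion-free connection, \<open>nijenhuis_form (\<lambda>y. D\<^sub>yJ) J v w = 4 N\<^sub>J(v,w)\<close>.\<close>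
definition nijenhuis_form ::
    "(real^'n::finite \<Rightarrow> real^'n^'n) \<Rightarrow> real^'n^'n \<Rightarrow> real^'n \<Rightarrow> real^'n \<Rightarrow> real^'n" where
  "nijenhuis_form A Jm v w
    = A (Jm *v v) *v w - A (Jm *v w) *v v + Jm *v (A w *v v) - Jm *v (A v *v w)"

lemma nijenhuis_form_eq_0_imp_J_invariant:
  fixes Jm Gm :: "real^'n::finite^'n" and A :: "real^'n \<Rightarrow> real^'n^'n"
  assumes J_sq: "\<And>u. Jm *v (Jm *v u) = - u"
    and G_sym: "\<And>u v. u \<bullet> (Gm *v v) = v \<bullet> (Gm *v u)"
    and G_pos: "\<And>u. u \<noteq> 0 \<Longrightarrow> u \<bullet> (Gm *v u) > 0"
    and J_skew: "\<And>u v. (Jm *v u) \<bullet> (Gm *v v) = - (u \<bullet> (Gm *v (Jm *v v)))"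
    and A_anticomm: "\<And>y u. Jm *v (A y *v u) = - (A y *v (Jm *v u))"
    and A_skew: "\<And>y u v. (A y *v u) \<bullet> (Gm *v v) = - (u \<bullet> (Gm *v (A y *v v)))"
    and A_nijenhuis: "\<And>v w. nijenhuis_form A Jm v w = 0"
  shows "A (Jm *v w) *v (Jm *v v) = A w *v v"
proof -
  define ip where "ip u v = u \<bullet> (Gm *v v)" for u v
  have ip_diff: "ip (a - b) c = ip a c - ip b c" for a b c
    by (simp add: ip_def inner_diff_left)
  have ip_uminus: "ip a (- c) = - ip a c" for a c
    by (simp add: ip_def matrix_vector_mult_uminus)
  define S where "S y x = A (Jm *v y) *v x - Jm *v (A y *v x)" for y x
  have S_sym: "S y x = S x y" for x y
    using A_nijenhuis[of x y] unfolding S_def nijenhuis_form_def by (simp add: algebra_simps)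
  have S_skew: "ip (S y x) z = - ip (S y z) x" for y x z
  proof -
    have 1: "ip (A (Jm *v y) *v x) z = - ip (A (Jm *v y) *v z) x"
      using A_skew G_sym unfolding ip_def by metis
    have "ip (Jm *v (A y *v x)) z = - ip (A y *v x) (Jm *v z)"
      using J_skew unfolding ip_def by metis
    also have "\<dots> = ip x (A y *v (Jm *v z))"
      using A_skew unfolding ip_def by simp
    also have "\<dots> = - ip x (Jm *v (A y *v z))"
      using A_anticomm[of y z] by (simp add: ip_uminus)
    also have "\<dots> = - ip (Jm *v (A y *v z)) x"
      using G_sym unfolding ip_def by metis
    finally have 2: "ip (Jm *v (A y *v x)) z = - ip (Jm *v (A y *v z)) x" .
    show ?thesis unfolding S_def ip_diff 1 2 by simp
  qed
  have S_orth: "ip (S y x) z = 0" for y x z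
  proof (rule sym_skew_form_eq_0[where T="\<lambda>y x z. ip (S y x) z"])
    show "ip (S x y) z = ip (S y x) z" for x y z by (simp only: S_sym)
    show "ip (S x y) z = - ip (S x z) y" for x y z by (rule S_skew)
  qed
  have S_zero: "S y x = 0" for y x
    using S_orth[of y x "S y x"] G_pos[of "S y x"] unfolding ip_def by (metis less_irrefl)
  have "A (Jm *v w) *v (Jm *v v) = Jm *v (A w *v (Jm *v v))"
    using S_zero[of w "Jm *v v"] unfolding S_def by simp
  also have "\<dots> = A w *v v"
    using A_anticomm[of w "Jm *v v"] by (simp add: matrix_vector_mult_uminus J_sq)
  finally show ?thesis .
qed

text \<open>In coordinates \<open>D\<^sub>yJ = P + [\<Gamma>, J]\<close>, with \<open>P\<close> the derivative of the components of \<open>J\<close>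
  along \<open>y\<close> and \<open>\<Gamma>\<close> the connection matrix of \<open>D\<close> along \<open>y\<close>; this is hypothesis \<open>A\<close> below.\<close>

lemma anticommute_add_commutator:
  fixes Jm P \<Gamma> A :: "real^'n::finite^'n"
  assumes J_sq: "\<And>u. Jm *v (Jm *v u) = - u"
    and P_anticomm: "\<And>u. Jm *v (P *v u) = - (P *v (Jm *v u))"
    and A: "\<And>u. A *v u = P *v u + \<Gamma> *v (Jm *v u) - Jm *v (\<Gamma> *v u)"
  shows "Jm *v (A *v u) = - (A *v (Jm *v u))"
  unfolding A matrix_vector_right_distrib matrix_vector_mult_diff_distrib J_sq P_anticomm
  by (simp add: matrix_vector_mult_uminus)

lemma skew_add_commutator:
  fixes P \<Gamma> Jm Gm Q A :: "real^'n::finite^'n" and \<beta> :: real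
  assumes G_sym: "\<And>u v. u \<bullet> (Gm *v v) = v \<bullet> (Gm *v u)"
    and J_skew: "\<And>u v. (Jm *v u) \<bullet> (Gm *v v) = - (u \<bullet> (Gm *v (Jm *v v)))"
    and \<Gamma>_weyl: "\<And>u v. (\<Gamma> *v u) \<bullet> (Gm *v v) + u \<bullet> (Gm *v (\<Gamma> *v v))
      = u \<bullet> (Q *v v) - 2 * \<beta> * (u \<bullet> (Gm *v v))"
    and J_skew_deriv: "\<And>u v. (P *v u) \<bullet> (Gm *v v) + (Jm *v u) \<bullet> (Q *v v)
      + (P *v v) \<bullet> (Gm *v u) + (Jm *v v) \<bullet> (Q *v u) = 0"
    and Q_sym: "\<And>u v. u \<bullet> (Q *v v) = v \<bullet> (Q *v u)"
    and A: "\<And>u. A *v u = P *v u + \<Gamma> *v (Jm *v u) - Jm *v (\<Gamma> *v u)"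
  shows "(A *v u) \<bullet> (Gm *v v) = - (u \<bullet> (Gm *v (A *v v)))"
proof -
  have "(Jm *v (\<Gamma> *v u)) \<bullet> (Gm *v v) = - ((\<Gamma> *v u) \<bullet> (Gm *v (Jm *v v)))"
    and "(Jm *v u) \<bullet> (Gm *v (\<Gamma> *v v)) = - (u \<bullet> (Gm *v (Jm *v (\<Gamma> *v v))))"
    and "(Jm *v u) \<bullet> (Gm *v v) = - (u \<bullet> (Gm *v (Jm *v v)))"
    by (rule J_skew)+
  moreover have "u \<bullet> (Gm *v (P *v v)) = (P *v v) \<bullet> (Gm *v u)" by (rule G_sym)
  moreover have "u \<bullet> (Q *v (Jm *v v)) = (Jm *v v) \<bullet> (Q *v u)" by (rule Q_sym)
  ultimately show ?thesis
    using \<Gamma>_weyl[of "Jm *v u" v] \<Gamma>_weyl[of u "Jm *v v"] J_skew_deriv[of u v]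
    unfolding A matrix_vector_right_distrib matrix_vector_mult_diff_distrib
      inner_add_left inner_diff_left inner_add_right inner_diff_right
    by (simp add: algebra_simps)
qed

lemma nijenhuis_form_add_commutator:
  fixes Jm :: "real^'n::finite^'n" and P \<Gamma> A :: "real^'n \<Rightarrow> real^'n^'n"
  assumes J_sq: "\<And>u. Jm *v (Jm *v u) = - u"
    and \<Gamma>_sym: "\<And>y u. \<Gamma> y *v u = \<Gamma> u *v y"
    and A: "\<And>y u. A y *v u = P y *v u + \<Gamma> y *v (Jm *v u) - Jm *v (\<Gamma> y *v u)"
  shows "nijenhuis_form A Jm v w = nijenhuis_form P Jm v w"
proof -
  have "\<Gamma> (Jm *v v) *v (Jm *v w) = \<Gamma> (Jm *v w) *v (Jm *v v)"
    and "\<Gamma> (Jm *v v) *v w = \<Gamma> w *v (Jm *v v)"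
    and "\<Gamma> (Jm *v w) *v v = \<Gamma> v *v (Jm *v w)"
    and "\<Gamma> w *v v = \<Gamma> v *v w"
    by (rule \<Gamma>_sym)+
  then show ?thesis
    unfolding nijenhuis_form_def A matrix_vector_right_distrib matrix_vector_mult_diff_distrib J_sq
    by (simp add: matrix_vector_mult_uminus algebra_simps)
qed

section \<open>Coordinate expressions at a point\<close>

definition tens_mat :: "'n::finite tens2 \<Rightarrow> real^'n \<Rightarrow> real^'n^'n" where
  "tens_mat T x = (\<chi> i j. T x i j)"

definition tens_deriv :: "'n::finite tens2 \<Rightarrow> real^'n \<Rightarrow> real^'n \<Rightarrow> real^'n^'n" where
  "tens_deriv T x y = (\<chi> i j. \<Sum>a\<in>UNIV. y$a * pd (\<lambda>z. T z i j) a x)"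

definition conn_mat :: "'n::finite tens2 \<Rightarrow> 'n tens2 \<Rightarrow> real^'n \<Rightarrow> real^'n \<Rightarrow> real^'n^'n" where
  "conn_mat g J x y = (\<chi> b d. \<Sum>a\<in>UNIV. y$a * GamC g J x b a d)"

definition Blow_along :: "'n::finite tens2 \<Rightarrow> 'n tens2 \<Rightarrow> real^'n \<Rightarrow> real^'n \<Rightarrow> real" where
  "Blow_along g J x y = (\<Sum>a\<in>UNIV. y$a * Blow g J x a)"

definition nablacJ_mat :: "'n::finite tens2 \<Rightarrow> 'n tens2 \<Rightarrow> real^'n \<Rightarrow> real^'n \<Rightarrow> real^'n^'n" where
  "nablacJ_mat g J x y = (\<chi> b e. \<Sum>a\<in>UNIV. y$a * nablacJ g J x a b e)"

lemma Jv_eq_tens_mat: "Jv J x u = tens_mat J x *v u"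
  by (simp add: Jv_def tens_mat_def matrix_vector_mult_def)

lemma Gc_eq_nablacJ_mat: "Gc g J x v w = -(1/2) *\<^sub>R (tens_mat J x *v (nablacJ_mat g J x w *v v))"
  by (simp add: vec_eq_iff Gc_def tens_mat_def nablacJ_mat_def matrix_vector_mult_def
      sum_distrib_left sum_distrib_right algebra_simps sum_negf sum_divide_distrib)

lemma tens_deriv_mv: "(tens_deriv T x y *v w)$b = (\<Sum>a\<in>UNIV. y$a * (\<Sum>e\<in>UNIV. pd (\<lambda>z. T z b e) a x * w$e))"
proof -
  have "(tens_deriv T x y *v w)$b = (\<Sum>e\<in>UNIV. \<Sum>a\<in>UNIV. y$a * pd (\<lambda>z. T z b e) a x * w$e)"
    by (simp add: tens_deriv_def matrix_vector_mult_def sum_distrib_right)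
  also have "\<dots> = (\<Sum>a\<in>UNIV. \<Sum>e\<in>UNIV. y$a * pd (\<lambda>z. T z b e) a x * w$e)"
    by (rule sum.swap)
  finally show ?thesis by (simp add: sum_distrib_left mult.assoc)
qed

lemma tens_deriv_sym:
  assumes "\<And>i j l. pd (\<lambda>y. T y i j) l x = pd (\<lambda>y. T y j i) l x"
  shows "u \<bullet> (tens_deriv T x y *v v) = v \<bullet> (tens_deriv T x y *v u)"
  unfolding inner_matrix_vector_sum by (subst bilinear_sum_swap) (simp add: tens_deriv_def assms)

lemma nablacJ_mat_expand:
  "nablacJ_mat g J x y *v u = tens_deriv J x y *v u + conn_mat g J x y *v (tens_mat J x *v u)
    - tens_mat J x *v (conn_mat g J x y *v u)"
proof -
  have "(nablacJ_mat g J x y *v u)$b = (tens_deriv J x y *v u + conn_mat g J x y *v (tens_mat J x *v u)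
    - tens_mat J x *v (conn_mat g J x y *v u))$b" for b
  proof -
    have 1: "(nablacJ_mat g J x y *v u)$b = (\<Sum>e\<in>UNIV. \<Sum>a\<in>UNIV. y$a * pd (\<lambda>y. J y b e) a x * u$e)
        + (\<Sum>e\<in>UNIV. \<Sum>a\<in>UNIV. \<Sum>d\<in>UNIV. y$a * GamC g J x b a d * J x d e * u$e)
        - (\<Sum>e\<in>UNIV. \<Sum>a\<in>UNIV. \<Sum>d\<in>UNIV. y$a * GamC g J x d a e * J x b d * u$e)"
      by (simp add: nablacJ_mat_def matrix_vector_mult_def nablacJ_def sum_distrib_left sum_distrib_right
          sum.distrib sum_subtractf algebra_simps)
    have 2: "(tens_deriv J x y *v u)$b = (\<Sum>e\<in>UNIV. \<Sum>a\<in>UNIV. y$a * pd (\<lambda>y. J y b e) a x * u$e)"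
      by (simp add: tens_deriv_def matrix_vector_mult_def sum_distrib_right)
    have "(conn_mat g J x y *v (tens_mat J x *v u))$b
        = (\<Sum>d\<in>UNIV. \<Sum>a\<in>UNIV. \<Sum>e\<in>UNIV. y$a * GamC g J x b a d * J x d e * u$e)"
      by (simp add: conn_mat_def tens_mat_def matrix_vector_mult_def sum_distrib_right
          sum_distrib_left algebra_simps)
    also have "\<dots> = (\<Sum>e\<in>UNIV. \<Sum>a\<in>UNIV. \<Sum>d\<in>UNIV. y$a * GamC g J x b a d * J x d e * u$e)"
      by (subst sum.swap, subst (2) sum.swap, subst sum.swap) simp
    finally have 3: "(conn_mat g J x y *v (tens_mat J x *v u))$b = \<dots>" .
    have "(tens_mat J x *v (conn_mat g J x y *v u))$b
        = (\<Sum>d\<in>UNIV. \<Sum>e\<in>UNIV. \<Sum>a\<in>UNIV. y$a * GamC g J x d a e * J x b d * u$e)"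
      by (simp add: conn_mat_def tens_mat_def matrix_vector_mult_def sum_distrib_right
          sum_distrib_left algebra_simps)
    also have "\<dots> = (\<Sum>e\<in>UNIV. \<Sum>a\<in>UNIV. \<Sum>d\<in>UNIV. y$a * GamC g J x d a e * J x b d * u$e)"
      by (subst sum.swap, subst (2) sum.swap) simp
    finally have 4: "(tens_mat J x *v (conn_mat g J x y *v u))$b = \<dots>" .
    show ?thesis using 1 2 3 4 by simp
  qed
  then show ?thesis by (simp add: vec_eq_iff)
qed

lemma LC_sym:
  assumes "\<And>i j l. pd (\<lambda>y. g y i j) l x = pd (\<lambda>y. g y j i) l x"
  shows "LC g x k i j = LC g x k j i"
  unfolding LC_def
  by (rule arg_cong[where f="\<lambda>t. 1/2*t"], rule sum.cong[OF refl]) (simp add: assms[of i j] algebra_simps)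

lemma GamC_sym:
  assumes "\<And>i j. g x i j = g x j i" and "\<And>i j l. pd (\<lambda>y. g y i j) l x = pd (\<lambda>y. g y j i) l x"
  shows "GamC g J x b a d = GamC g J x b d a"
  unfolding GamC_def using LC_sym[of g x, OF assms(2)] assms(1) by (simp add: kdelta_def algebra_simps)

lemma conn_mat_sym:
  assumes "\<And>i j. g x i j = g x j i" and "\<And>i j l. pd (\<lambda>y. g y i j) l x = pd (\<lambda>y. g y j i) l x"
  shows "conn_mat g J x y *v u = conn_mat g J x u *v y"
proof -
  have "(conn_mat g J x y *v u)$b = (conn_mat g J x u *v y)$b" for b
  proof -
    have "(conn_mat g J x y *v u)$b = (\<Sum>d\<in>UNIV. \<Sum>a\<in>UNIV. y$a * GamC g J x b a d * u$d)"
      by (simp add: conn_mat_def matrix_vector_mult_def sum_distrib_right)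
    also have "\<dots> = (\<Sum>a\<in>UNIV. \<Sum>d\<in>UNIV. u$d * GamC g J x b d a * y$a)"
      by (subst sum.swap) (simp add: GamC_sym[OF assms] algebra_simps)
    also have "\<dots> = (conn_mat g J x u *v y)$b"
      by (simp add: conn_mat_def matrix_vector_mult_def sum_distrib_right)
    finally show ?thesis .
  qed
  then show ?thesis by (simp add: vec_eq_iff)
qed

lemma LC_lower:
  assumes g_sym: "\<And>i j. g x i j = g x j i"
    and g_ginv: "\<And>b l. (\<Sum>c\<in>UNIV. g x b c * ginv g x c l) = kdelta b l"
  shows "(\<Sum>c\<in>UNIV. LC g x c i j * g x c l)
    = (1/2) * (pd (\<lambda>y. g y j l) i x + pd (\<lambda>y. g y i l) j x - pd (\<lambda>y. g y i j) l x)"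
proof -
  define X where "X m = pd (\<lambda>y. g y j m) i x + pd (\<lambda>y. g y i m) j x - pd (\<lambda>y. g y i j) m x" for m
  have "(\<Sum>c\<in>UNIV. LC g x c i j * g x c l) = (1/2) * (\<Sum>c\<in>UNIV. \<Sum>m\<in>UNIV. ginv g x c m * X m * g x c l)"
    unfolding LC_def X_def by (simp add: sum_distrib_left sum_distrib_right algebra_simps)
  also have "\<dots> = (1/2) * (\<Sum>m\<in>UNIV. (\<Sum>c\<in>UNIV. g x l c * ginv g x c m) * X m)"
    by (subst sum.swap) (simp add: sum_distrib_left sum_distrib_right g_sym[of l] algebra_simps)
  also have "\<dots> = (1/2) * X l"
    by (simp add: g_ginv)
  finally show ?thesis by (simp add: X_def)
qed

lemma Bup_lower:
  assumes g_sym: "\<And>i j. g x i j = g x j i"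
    and g_ginv: "\<And>b l. (\<Sum>c\<in>UNIV. g x b c * ginv g x c l) = kdelta b l"
  shows "(\<Sum>c\<in>UNIV. Bup g J x c * g x c d) = Blow g J x d"
proof -
  have "(\<Sum>c\<in>UNIV. Bup g J x c * g x c d) = (\<Sum>c\<in>UNIV. \<Sum>e\<in>UNIV. ginv g x c e * Blow g J x e * g x c d)"
    by (simp add: Bup_def sum_distrib_right)
  also have "\<dots> = (\<Sum>e\<in>UNIV. (\<Sum>c\<in>UNIV. g x d c * ginv g x c e) * Blow g J x e)"
    by (subst sum.swap) (simp add: sum_distrib_left sum_distrib_right g_sym[of d] algebra_simps)
  finally show ?thesis by (simp add: g_ginv)
qed

lemma GamC_lower:
  assumes g_sym: "\<And>i j. g x i j = g x j i"
    and g_ginv: "\<And>b l. (\<Sum>c\<in>UNIV. g x b c * ginv g x c l) = kdelta b l"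
  shows "(\<Sum>c\<in>UNIV. GamC g J x c a b * g x c d)
    = (1/2) * (pd (\<lambda>y. g y b d) a x + pd (\<lambda>y. g y a d) b x - pd (\<lambda>y. g y a b) d x)
      - Blow g J x a * g x b d + Blow g J x d * g x a b - Blow g J x b * g x a d"
proof -
  have "(\<Sum>c\<in>UNIV. GamC g J x c a b * g x c d) = (\<Sum>c\<in>UNIV. LC g x c a b * g x c d)
     - Blow g J x a * (\<Sum>c\<in>UNIV. kdelta c b * g x c d) + (\<Sum>c\<in>UNIV. Bup g J x c * g x c d) * g x a b
     - Blow g J x b * (\<Sum>c\<in>UNIV. kdelta c a * g x c d)"
    unfolding GamC_def
    by (simp add: sum.distrib sum_subtractf sum_distrib_left sum_distrib_right algebra_simps)
  then show ?thesis
    by (simp add: LC_lower[OF assms] Bup_lower[OF assms])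
qed

text \<open>\<open>\<nabla>\<^sup>c\<^sub>a g\<^sub>b\<^sub>d = 2 B\<^sub>a g\<^sub>b\<^sub>d\<close>, written out for the Christoffel symbols \<open>GamC\<close>.\<close>
lemma GamC_weyl:
  assumes g_sym: "\<And>i j. g x i j = g x j i"
    and pd_g_sym: "\<And>i j l. pd (\<lambda>y. g y i j) l x = pd (\<lambda>y. g y j i) l x"
    and g_ginv: "\<And>b l. (\<Sum>c\<in>UNIV. g x b c * ginv g x c l) = kdelta b l"
  shows "(\<Sum>c\<in>UNIV. GamC g J x c a b * g x c d) + (\<Sum>c\<in>UNIV. g x b c * GamC g J x c a d)
    = pd (\<lambda>z. g z b d) a x - 2 * Blow g J x a * g x b d"
proof -
  have "(\<Sum>c\<in>UNIV. g x b c * GamC g J x c a d) = (\<Sum>c\<in>UNIV. GamC g J x c a d * g x c b)"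
    by (simp add: g_sym[of b] mult.commute)
  then show ?thesis
    unfolding GamC_lower[OF g_sym g_ginv]
    using g_sym[of a b] g_sym[of a d] g_sym[of b d] pd_g_sym[of d b a]
    by (simp add: algebra_simps)
qed

section \<open>The conformal connection of a conformal almost Hermitian chart\<close>

context
  fixes U :: "(real^'n::finite) set" and g J :: "'n tens2"
  assumes cah: "conf_almost_hermitian U g J"
begin

lemma open_chart: "open U"
  using cah by (simp add: conf_almost_hermitian_def)

lemma g_differentiable: "x \<in> U \<Longrightarrow> (\<lambda>y. g y i j) differentiable at x"
  using cah open_chart smooth_fun_differentiable_at
  unfolding conf_almost_hermitian_def smooth_tens_def by blast

lemma J_differentiable: "x \<in> U \<Longrightarrow> (\<lambda>y. J y i j) differentiable at x"
  using cah open_chart smooth_fun_differentiable_at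
  unfolding conf_almost_hermitian_def smooth_tens_def by blast

lemma g_sym: "x \<in> U \<Longrightarrow> g x i j = g x j i"
  using cah by (simp add: conf_almost_hermitian_def)

lemma J_sq: "x \<in> U \<Longrightarrow> (\<Sum>b\<in>UNIV. J x a b * J x b c) = - kdelta a c"
  using cah by (simp add: conf_almost_hermitian_def)

lemma J_orthogonal: "x \<in> U \<Longrightarrow> (\<Sum>c\<in>UNIV. \<Sum>d\<in>UNIV. g x c d * J x c a * J x d b) = g x a b"
  using cah by (simp add: conf_almost_hermitian_def)

lemma pd_g_sym: "x \<in> U \<Longrightarrow> pd (\<lambda>y. g y i j) l x = pd (\<lambda>y. g y j i) l x"
  by (rule pd_cong_open[OF g_differentiable open_chart]) (auto intro: g_sym)

lemma J_sq_mv: "x \<in> U \<Longrightarrow> tens_mat J x *v (tens_mat J x *v u) = - u"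
proof -
  assume x: "x \<in> U"
  have "tens_mat J x ** tens_mat J x = - mat 1"
    using J_sq[OF x] by (simp add: vec_eq_iff tens_mat_def matrix_matrix_mult_def mat_def kdelta_def)
  then show ?thesis
    by (simp add: matrix_vector_mul_assoc matrix_vector_mult_uminus_left)
qed

lemma g_sym_inner: "x \<in> U \<Longrightarrow> u \<bullet> (tens_mat g x *v v) = v \<bullet> (tens_mat g x *v u)"
  unfolding inner_matrix_vector_sum by (subst bilinear_sum_swap) (simp add: tens_mat_def g_sym)

lemma g_pos_inner: "x \<in> U \<Longrightarrow> u \<noteq> 0 \<Longrightarrow> u \<bullet> (tens_mat g x *v u) > 0"
  using cah unfolding inner_matrix_vector_sum conf_almost_hermitian_def
  by (simp add: tens_mat_def algebra_simps)

lemma J_orthogonal_inner: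
  assumes x: "x \<in> U"
  shows "(tens_mat J x *v u) \<bullet> (tens_mat g x *v (tens_mat J x *v v)) = u \<bullet> (tens_mat g x *v v)"
proof -
  have "transpose (tens_mat J x) ** (tens_mat g x ** tens_mat J x) = tens_mat g x"
    using J_orthogonal[OF x]
    by (simp add: vec_eq_iff tens_mat_def matrix_matrix_mult_def transpose_def sum_distrib_left
        algebra_simps)
  then show ?thesis
    by (simp add: inner_matrix_vector_both matrix_vector_mul_assoc)
qed

lemma J_skew_inner:
  "x \<in> U \<Longrightarrow> (tens_mat J x *v u) \<bullet> (tens_mat g x *v v) = - (u \<bullet> (tens_mat g x *v (tens_mat J x *v v)))"
  using J_orthogonal_inner[of x "tens_mat J x *v u" v] by (simp add: J_sq_mv matrix_vector_mult_uminus)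

lemma J_skew: "x \<in> U \<Longrightarrow> (\<Sum>c\<in>UNIV. g x c d * J x c b) + (\<Sum>c\<in>UNIV. g x c b * J x c d) = 0"
proof -
  assume x: "x \<in> U"
  have "(tens_mat J x *v axis b 1) \<bullet> (tens_mat g x *v axis d 1) = (\<Sum>c\<in>UNIV. g x c d * J x c b)"
    unfolding inner_matrix_vector_pair_sum bilinear_sum_axis by (simp add: tens_mat_def mult.commute)
  moreover have "axis b 1 \<bullet> (tens_mat g x *v (tens_mat J x *v axis d 1)) = (\<Sum>c\<in>UNIV. g x c b * J x c d)"
    unfolding matrix_vector_mul_assoc inner_matrix_vector_sum bilinear_sum_axis
    by (simp add: tens_mat_def matrix_matrix_mult_def g_sym[OF x, of b])
  ultimately show ?thesis
    using J_skew_inner[OF x, of "axis b 1" "axis d 1"] by simp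
qed

lemma g_ginv: "x \<in> U \<Longrightarrow> (\<Sum>c\<in>UNIV. g x b c * ginv g x c l) = kdelta b l"
proof -
  assume x: "x \<in> U"
  have "tens_mat g x *v v = 0 \<Longrightarrow> v = 0" for v
    using g_pos_inner[OF x, of v] by (metis inner_zero_right less_irrefl)
  then have "invertible (tens_mat g x)"
    using matrix_left_invertible_ker invertible_left_inverse by blast
  then have "tens_mat g x ** matrix_inv (tens_mat g x) = mat 1"
    unfolding invertible_def matrix_inv_def
    by (rule someI_ex[where P="\<lambda>A'. tens_mat g x ** A' = mat 1 \<and> A' ** tens_mat g x = mat 1", THEN conjunct1])
  then have "(tens_mat g x ** matrix_inv (tens_mat g x))$b$l = (mat 1 :: real^'n^'n)$b$l"
    by simp
  then show ?thesis
    by (simp add: matrix_matrix_mult_def tens_mat_def ginv_def mat_def kdelta_def)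
qed

lemma pd_J_anticomm:
  assumes x: "x \<in> U"
  shows "(\<Sum>b\<in>UNIV. J x k b * pd (\<lambda>z. J z b e) a x + pd (\<lambda>z. J z k b) a x * J x b e) = 0"
proof -
  have "pd (\<lambda>z. \<Sum>b\<in>UNIV. J z k b * J z b e) a x = 0"
    by (rule pd_eq_0_if_locally_const[OF open_chart x]) (rule J_sq)
  then show ?thesis
    using x by (simp add: pd_sum_mult J_differentiable)
qed

lemma tens_deriv_J_anticomm:
  assumes x: "x \<in> U"
  shows "tens_mat J x *v (tens_deriv J x y *v u) = - (tens_deriv J x y *v (tens_mat J x *v u))"
proof -
  have "(tens_mat J x *v (tens_deriv J x y *v u) + tens_deriv J x y *v (tens_mat J x *v u))$k = 0" for k
  proof -
    have "(tens_mat J x *v (tens_deriv J x y *v u) + tens_deriv J x y *v (tens_mat J x *v u))$k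
      = (\<Sum>b\<in>UNIV. \<Sum>e\<in>UNIV. \<Sum>a\<in>UNIV. u$e * y$a * (J x k b * pd (\<lambda>z. J z b e) a x))
      + (\<Sum>b\<in>UNIV. \<Sum>e\<in>UNIV. \<Sum>a\<in>UNIV. u$e * y$a * (pd (\<lambda>z. J z k b) a x * J x b e))"
      by (simp add: tens_mat_def tens_deriv_def matrix_vector_mult_def sum_distrib_left
          sum_distrib_right algebra_simps) (rule sum.cong[OF refl], rule sum.swap)
    also have "\<dots> = (\<Sum>e\<in>UNIV. \<Sum>a\<in>UNIV. u$e * y$a * (\<Sum>b\<in>UNIV. J x k b * pd (\<lambda>z. J z b e) a x
        + pd (\<lambda>z. J z k b) a x * J x b e))"
      by (simp add: sum.distrib[symmetric] sum_distrib_left algebra_simps)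
        (subst sum.swap, rule sum.cong[OF refl], rule sum.swap)
    also have "\<dots> = 0"
      by (simp add: pd_J_anticomm[OF x])
    finally show ?thesis .
  qed
  then show ?thesis by (simp add: vec_eq_iff eq_neg_iff_add_eq_0)
qed

lemma pd_J_skew:
  assumes x: "x \<in> U"
  shows "(\<Sum>c\<in>UNIV. pd (\<lambda>z. J z c b) a x * g x c d + J x c b * pd (\<lambda>z. g z c d) a x
      + pd (\<lambda>z. J z c d) a x * g x c b + J x c d * pd (\<lambda>z. g z c b) a x) = 0"
proof -
  have "pd (\<lambda>z. (\<Sum>c\<in>UNIV. g z c d * J z c b) + (\<Sum>c\<in>UNIV. g z c b * J z c d)) a x = 0"
    by (rule pd_eq_0_if_locally_const[OF open_chart x]) (rule J_skew)
  moreover have "pd (\<lambda>z. (\<Sum>c\<in>UNIV. g z c d * J z c b) + (\<Sum>c\<in>UNIV. g z c b * J z c d)) a x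
    = pd (\<lambda>z. \<Sum>c\<in>UNIV. g z c d * J z c b) a x + pd (\<lambda>z. \<Sum>c\<in>UNIV. g z c b * J z c d) a x"
    by (rule pd_add) (use g_differentiable J_differentiable x in auto)
  ultimately show ?thesis
    using x by (simp add: pd_sum_mult g_differentiable J_differentiable sum.distrib[symmetric]
        algebra_simps)
qed

lemma tens_deriv_J_skew:
  fixes y u v :: "real^'n"
  assumes x: "x \<in> U"
  defines "P \<equiv> tens_deriv J x y" and "Q \<equiv> tens_deriv g x y"
    and "Jm \<equiv> tens_mat J x" and "G \<equiv> tens_mat g x"
  shows "(P *v u) \<bullet> (G *v v) + (Jm *v u) \<bullet> (Q *v v) + (P *v v) \<bullet> (G *v u) + (Jm *v v) \<bullet> (Q *v u) = 0"
proof -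
  have swap: "(M *v v) \<bullet> (N *v u) = (\<Sum>b\<in>UNIV. \<Sum>d\<in>UNIV. u$b * v$d * (\<Sum>c\<in>UNIV. M$c$d * N$c$b))"
    for M N :: "real^'n^'n"
    by (subst inner_matrix_vector_pair_sum, subst bilinear_sum_swap, rule refl)
  have entries: "(\<Sum>c\<in>UNIV. P$c$b * G$c$d) + (\<Sum>c\<in>UNIV. Jm$c$b * Q$c$d)
     + (\<Sum>c\<in>UNIV. P$c$d * G$c$b) + (\<Sum>c\<in>UNIV. Jm$c$d * Q$c$b) = 0" for b d
  proof -
    have "(\<Sum>c\<in>UNIV. P$c$b * G$c$d) + (\<Sum>c\<in>UNIV. Jm$c$b * Q$c$d)
        + (\<Sum>c\<in>UNIV. P$c$d * G$c$b) + (\<Sum>c\<in>UNIV. Jm$c$d * Q$c$b)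
      = (\<Sum>c\<in>UNIV. \<Sum>a\<in>UNIV. y$a * (pd (\<lambda>z. J z c b) a x * g x c d + J x c b * pd (\<lambda>z. g z c d) a x
        + pd (\<lambda>z. J z c d) a x * g x c b + J x c d * pd (\<lambda>z. g z c b) a x))"
      by (simp add: P_def Q_def G_def Jm_def tens_mat_def tens_deriv_def sum_distrib_left
          sum_distrib_right sum.distrib[symmetric] algebra_simps)
    also have "\<dots> = 0"
      unfolding sum_swap_mult_left by (simp add: pd_J_skew[OF x])
    finally show ?thesis .
  qed
  show ?thesis
    unfolding inner_matrix_vector_pair_sum[of P u] inner_matrix_vector_pair_sum[of Jm u] swap
      bilinear_sum_add
    using entries by (simp add: algebra_simps)
qed

lemma conn_mat_weyl:
  fixes y u v :: "real^'n"
  assumes x: "x \<in> U"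
  defines "\<Gamma> \<equiv> conn_mat g J x y" and "G \<equiv> tens_mat g x" and "\<beta> \<equiv> Blow_along g J x y"
  shows "(\<Gamma> *v u) \<bullet> (G *v v) + u \<bullet> (G *v (\<Gamma> *v v))
    = u \<bullet> (tens_deriv g x y *v v) - 2 * \<beta> * (u \<bullet> (G *v v))"
proof -
  have entries: "(\<Sum>c\<in>UNIV. \<Gamma>$c$b * G$c$d) + (\<Sum>c\<in>UNIV. G$b$c * \<Gamma>$c$d)
      = tens_deriv g x y$b$d - 2 * \<beta> * G$b$d" for b d
  proof -
    have "(\<Sum>c\<in>UNIV. \<Gamma>$c$b * G$c$d) + (\<Sum>c\<in>UNIV. G$b$c * \<Gamma>$c$d)
       = (\<Sum>c\<in>UNIV. \<Sum>a\<in>UNIV. y$a * (GamC g J x c a b * g x c d + g x b c * GamC g J x c a d))"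
      by (simp add: \<Gamma>_def G_def conn_mat_def tens_mat_def sum_distrib_left sum_distrib_right
          sum.distrib[symmetric] algebra_simps)
    also have "\<dots> = (\<Sum>a\<in>UNIV. y$a * (pd (\<lambda>z. g z b d) a x - 2 * Blow g J x a * g x b d))"
      unfolding sum_swap_mult_left sum.distrib
      by (simp add: GamC_weyl[OF g_sym[OF x] pd_g_sym[OF x] g_ginv[OF x]])
    also have "\<dots> = tens_deriv g x y$b$d - 2 * \<beta> * G$b$d"
      by (simp add: \<beta>_def G_def Blow_along_def tens_mat_def tens_deriv_def sum_distrib_left
          sum_distrib_right sum_subtractf algebra_simps)
    finally show ?thesis .
  qed
  have "(\<Gamma> *v u) \<bullet> (G *v v) + u \<bullet> (G *v (\<Gamma> *v v))
      = (\<Sum>b\<in>UNIV. \<Sum>d\<in>UNIV. u$b * v$d * ((\<Sum>c\<in>UNIV. \<Gamma>$c$b * G$c$d) + (\<Sum>c\<in>UNIV. G$b$c * \<Gamma>$c$d)))"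
    unfolding inner_matrix_vector_pair_sum matrix_vector_mul_assoc bilinear_sum_add[symmetric]
    by (simp add: inner_matrix_vector_sum matrix_matrix_mult_def)
  also have "\<dots> = (\<Sum>b\<in>UNIV. \<Sum>d\<in>UNIV. u$b * v$d * (tens_deriv g x y$b$d - 2 * \<beta> * G$b$d))"
    by (simp add: entries)
  also have "\<dots> = u \<bullet> (tens_deriv g x y *v v) - 2 * \<beta> * (u \<bullet> (G *v v))"
    by (simp add: inner_matrix_vector_sum sum_subtractf sum_distrib_left algebra_simps)
  finally show ?thesis .
qed

lemma pd_Jv: "x \<in> U \<Longrightarrow> pd (\<lambda>y. Jv J y w $ b) a x = (\<Sum>e\<in>UNIV. pd (\<lambda>z. J z b e) a x * w$e)"
  by (simp add: Jv_def pd_sum pd_mult_const J_differentiable)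

lemma nijenhuis_const_fields:
  assumes x: "x \<in> U"
  shows "nijenhuis J (\<lambda>_. v) (\<lambda>_. w) x
    = (1/4) *\<^sub>R nijenhuis_form (tens_deriv J x) (tens_mat J x) v w"
proof -
  have "lie (Jfield J (\<lambda>_. v)) (Jfield J (\<lambda>_. w)) x
      = tens_deriv J x (tens_mat J x *v v) *v w - tens_deriv J x (tens_mat J x *v w) *v v"
    unfolding Jv_eq_tens_mat[symmetric]
    by (simp add: vec_eq_iff lie_def Jfield_def pd_Jv[OF x] tens_deriv_mv sum_subtractf)
  moreover have "lie (Jfield J (\<lambda>_. v)) (\<lambda>_. w) x = - (tens_deriv J x w *v v)"
    by (simp add: vec_eq_iff lie_def Jfield_def pd_Jv[OF x] tens_deriv_mv sum_negf)
  moreover have "lie (\<lambda>_. v) (Jfield J (\<lambda>_. w)) x = tens_deriv J x v *v w"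
    by (simp add: vec_eq_iff lie_def Jfield_def pd_Jv[OF x] tens_deriv_mv)
  moreover have "lie (\<lambda>_. v) (\<lambda>_. w) x = 0"
    by (simp add: vec_eq_iff lie_def)
  ultimately show ?thesis
    unfolding nijenhuis_def nijenhuis_form_def Jv_eq_tens_mat
    by (simp add: matrix_vector_mult_uminus)
qed

lemma nablacJ_mat_anticomm:
  "x \<in> U \<Longrightarrow> tens_mat J x *v (nablacJ_mat g J x y *v u) = - (nablacJ_mat g J x y *v (tens_mat J x *v u))"
  by (rule anticommute_add_commutator[OF J_sq_mv tens_deriv_J_anticomm nablacJ_mat_expand])

lemma nablacJ_mat_skew:
  "x \<in> U \<Longrightarrow> (nablacJ_mat g J x y *v u) \<bullet> (tens_mat g x *v v)
    = - (u \<bullet> (tens_mat g x *v (nablacJ_mat g J x y *v v)))"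
  by (rule skew_add_commutator[OF g_sym_inner J_skew_inner conn_mat_weyl tens_deriv_J_skew
        tens_deriv_sym[OF pd_g_sym] nablacJ_mat_expand])

lemma nijenhuis_form_nablacJ_mat:
  assumes x: "x \<in> U"
  shows "nijenhuis_form (nablacJ_mat g J x) (tens_mat J x) v w = 4 *\<^sub>R nijenhuis J (\<lambda>_. v) (\<lambda>_. w) x"
  using nijenhuis_form_add_commutator[OF J_sq_mv[OF x] conn_mat_sym[OF g_sym[OF x] pd_g_sym[OF x]]
      nablacJ_mat_expand]
  by (simp add: nijenhuis_const_fields[OF x])

lemma Gc_J_invariant:
  assumes x: "x \<in> U" and integrable: "\<And>v w. nijenhuis J (\<lambda>_. v) (\<lambda>_. w) x = 0"
  shows "Gc g J x (Jv J x v) (Jv J x w) = Gc g J x v w"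
proof -
  have "nablacJ_mat g J x (tens_mat J x *v w) *v (tens_mat J x *v v) = nablacJ_mat g J x w *v v"
  proof (rule nijenhuis_form_eq_0_imp_J_invariant)
    show "nijenhuis_form (nablacJ_mat g J x) (tens_mat J x) v w = 0" for v w
      by (simp add: nijenhuis_form_nablacJ_mat[OF x] integrable)
  qed (use x J_sq_mv g_sym_inner g_pos_inner J_skew_inner nablacJ_mat_anticomm nablacJ_mat_skew
      in blast)+
  then show ?thesis
    unfolding Gc_eq_nablacJ_mat Jv_eq_tens_mat by simp
qed

lemma torsion_conn_gc:
  assumes x: "x \<in> U"
  shows "torsion (conn_gc g J) X Y x = Gc g J x (Y x) (X x) - Gc g J x (X x) (Y x)"
proof -
  have "(\<Sum>a\<in>UNIV. \<Sum>d\<in>UNIV. GamC g J x b a d * Y x $ a * X x $ d)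
      = (\<Sum>a\<in>UNIV. \<Sum>d\<in>UNIV. GamC g J x b a d * X x $ a * Y x $ d)" for b
    by (subst sum.swap) (simp add: GamC_sym[OF g_sym[OF x] pd_g_sym[OF x], of _ _ b] algebra_simps)
  then have "conn_c g J X Y x - conn_c g J Y X x = lie X Y x"
    by (simp add: vec_eq_iff conn_c_def lie_def sum_subtractf)
  then show ?thesis
    unfolding torsion_def conn_gc_def by (simp add: algebra_simps)
qed

end

theorem proposition4p6:
  fixes U :: "(real^'n::finite) set" and g J :: "'n tens2"
  assumes "CARD('n) \<ge> 4"
    and "conf_almost_hermitian U g J"
    and "\<forall>X Y. smooth_field X U \<longrightarrow> smooth_field Y U \<longrightarrow> (\<forall>x\<in>U. nijenhuis J X Y x = 0)"
  shows "(\<forall>x\<in>U. \<forall>v w. Gcminus g J x v w = 0)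
    \<and> (\<forall>X Y. smooth_field X U \<longrightarrow> smooth_field Y U \<longrightarrow>
         (\<forall>x\<in>U. torsion (conn_gc g J) (Jfield J X) (Jfield J Y) x = torsion (conn_gc g J) X Y x))"
proof -
  have integrable: "nijenhuis J (\<lambda>_. v) (\<lambda>_. w) x = 0" if "x \<in> U" for x v w
    using assms(3) smooth_field_const that by blast
  have Gc_inv: "Gc g J x (Jv J x v) (Jv J x w) = Gc g J x v w" if "x \<in> U" for x v w
    using Gc_J_invariant[OF assms(2) that integrable] that by blast
  show ?thesis
    unfolding Gcminus_def Jfield_def by (simp add: torsion_conn_gc[OF assms(2)] Gc_inv)
qed

end
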